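(* Let $n\ge 3$, $k\ge 1$ and $p\in\{0,1,2\}$. Then \[ \gamma_{\rm S}(C_n,C_{3k+p})\in \begin{cases} \{kn\}, & p=0,\\ \{kn,\;kn+1\}, & p=1,\\ \{kn+\lfloor n/2\rfloor,\; kn+\lfloor n/2\rfloor+1\}, & p=2. \end{cases} \] Moreover, if $n\equiv 0 \pmod 4$, then $\gamma_{\rm S}(C_n,C_{3k+1})=kn$ and $\gamma_{\rm S}(C_n,C_{3k+2})=kn+\lfloor n/2\rfloor$.
   Context: $C_m$ denotes the cycle on $m$ vertices; $\gamma$ denotes the domination number. For graphs $G,H$ and a function $f\colon V(G)\to V(H)$, the Sierpiński product $G\otimes_f H$ is the graph with vertex set $V(G)\times V(H)$ and edges of two types: (type 1) $(g,h)(g,h')$ for every $g\in V(G)$ and every edge $hh'\in E(H)$; (type 2) $(g,f(g'))(g',f(g))$ for every edge $gg'\in E(G)$. The Sierpiński domination number is $\gamma_{\rm S}(G,H)=\min_{f}\gamma(G\otimes_f H)$ over all functions $f\colon V(G)\to V(H)$. *)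

theory Defs
  imports Main "HOL-Library.FuncSet"
begin

record 'a graph =
  verts :: "'a set"
  adj :: "'a \<Rightarrow> 'a \<Rightarrow> bool"

definition cycle_graph :: "nat \<Rightarrow> nat graph" where
  "cycle_graph m = \<lparr> verts = {0..<m},
     adj = (\<lambda>i j. i < m \<and> j < m \<and> (Suc i mod m = j \<or> Suc j mod m = i)) \<rparr>"

definition sierpinski_product :: "'a graph \<Rightarrow> 'b graph \<Rightarrow> ('a \<Rightarrow> 'b) \<Rightarrow> ('a \<times> 'b) graph" where
  "sierpinski_product G H f = \<lparr> verts = verts G \<times> verts H,
     adj = (\<lambda>(g,h) (g',h').
        (g \<in> verts G \<and> g = g' \<and> adj H h h') \<or>
        (adj G g g' \<and> h = f g' \<and> h' = f g)) \<rparr>"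

definition dominating_set :: "'a graph \<Rightarrow> 'a set \<Rightarrow> bool" where
  "dominating_set G D \<longleftrightarrow> D \<subseteq> verts G \<and>
     (\<forall>v \<in> verts G. v \<in> D \<or> (\<exists>u \<in> D. adj G u v))"

definition domination_number :: "'a graph \<Rightarrow> nat" where
  "domination_number G = (LEAST k. \<exists>D. dominating_set G D \<and> finite D \<and> card D = k)"

definition sierpinski_domination_number :: "'a graph \<Rightarrow> 'b graph \<Rightarrow> nat" where
  "sierpinski_domination_number G H =
     (LEAST k. \<exists>f \<in> verts G \<rightarrow>\<^sub>E verts H. domination_number (sierpinski_product G H f) = k)"

end

theory Submission
  imports Defs
begin

text \<open>
  Write \<open>m = 3k + p\<close>. Inside a fiber \<open>{g} \<times> C\<^sub>m\<close>, \<open>s\<close> vertices of a dominating set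
  dominate at most \<open>3s\<close> vertices, and only the two vertices \<open>(g, f(g-1))\<close> and \<open>(g, f(g+1))\<close>
  can be dominated from the neighbouring fibers; hence every fiber contains at least \<open>k\<close>
  vertices. For \<open>p = 2\<close> a fiber \<open>g\<close> with exactly \<open>k\<close> vertices forces \<open>(g+1, f g)\<close> into
  the dominating set, whereas a fiber \<open>g+1\<close> with exactly \<open>k\<close> vertices cannot contain it; so
  no two consecutive fibers are that small, which costs \<open>\<lceil>n/2\<rceil>\<close> extra vertices.
  The upper bounds are explicit: fibers are arithmetic progressions of difference 3, and \<open>f\<close>
  follows the pattern \<open>0,0,2,2,\<dots>\<close> resp. \<open>0,0,1,0,0,0,1,0,\<dots>\<close>, so that whatever a small
  fiber misses is dominated across the edges between fibers.
\<close>

lemma domination_number_le: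
  assumes "dominating_set G D" "finite D"
  shows "domination_number G \<le> card D"
  unfolding domination_number_def by (rule Least_le) (use assms in auto)

lemma domination_number_geI:
  assumes "finite (verts G)" "\<And>D. dominating_set G D \<Longrightarrow> finite D \<Longrightarrow> L \<le> card D"
  shows "L \<le> domination_number G"
proof -
  have "dominating_set G (verts G)" by (simp add: dominating_set_def)
  then have "\<exists>k D. dominating_set G D \<and> finite D \<and> card D = k"
    using assms(1) by blast
  then have "\<exists>D. dominating_set G D \<and> finite D \<and> card D = domination_number G"
    unfolding domination_number_def by (rule LeastI_ex)
  then show ?thesis using assms(2) by metis
qed

lemma sierpinski_domination_number_le:
  assumes "f \<in> verts G \<rightarrow>\<^sub>E verts H"
  shows "sierpinski_domination_number G H \<le> domination_number (sierpinski_product G H f)"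
  unfolding sierpinski_domination_number_def by (rule Least_le) (use assms in auto)

lemma sierpinski_domination_number_geI:
  assumes "f\<^sub>0 \<in> verts G \<rightarrow>\<^sub>E verts H"
    and "\<And>f. f \<in> verts G \<rightarrow>\<^sub>E verts H \<Longrightarrow> L \<le> domination_number (sierpinski_product G H f)"
  shows "L \<le> sierpinski_domination_number G H"
proof -
  have "\<exists>f \<in> verts G \<rightarrow>\<^sub>E verts H.
      domination_number (sierpinski_product G H f) = sierpinski_domination_number G H"
    unfolding sierpinski_domination_number_def by (rule LeastI_ex) (use assms(1) in auto)
  then show ?thesis using assms(2) by metis
qed

definition cyc_succ :: "nat \<Rightarrow> nat \<Rightarrow> nat" where
  "cyc_succ m i = Suc i mod m"

definition cyc_pred :: "nat \<Rightarrow> nat \<Rightarrow> nat" where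
  "cyc_pred m i = (i + m - 1) mod m"

lemma cyc_succ_less: "0 < m \<Longrightarrow> cyc_succ m i < m"
  by (simp add: cyc_succ_def)

lemma cyc_pred_less: "0 < m \<Longrightarrow> cyc_pred m i < m"
  by (simp add: cyc_pred_def)

lemma cyc_succ_cyc_pred: "i < m \<Longrightarrow> cyc_succ m (cyc_pred m i) = i"
  unfolding cyc_succ_def cyc_pred_def by (cases i) (auto simp: mod_Suc)

lemma cyc_pred_cyc_succ: "i < m \<Longrightarrow> cyc_pred m (cyc_succ m i) = i"
  unfolding cyc_succ_def cyc_pred_def by (cases "Suc i = m") auto

lemma cyc_succ_eq_iff: "i < m \<Longrightarrow> j < m \<Longrightarrow> cyc_succ m j = i \<longleftrightarrow> j = cyc_pred m i"
  using cyc_pred_cyc_succ[of j m] cyc_succ_cyc_pred[of i m] by auto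

lemma cyc_pred_eq_minus: "0 < i \<Longrightarrow> i < m \<Longrightarrow> cyc_pred m i = i - 1"
  by (cases i) (simp_all add: cyc_pred_def)

lemma cyc_pred_0: "cyc_pred m 0 = m - 1"
  by (cases m) (simp_all add: cyc_pred_def)

lemma cyc_succ_eq_Suc: "Suc i < m \<Longrightarrow> cyc_succ m i = Suc i"
  by (simp add: cyc_succ_def)

lemma verts_cycle_graph: "verts (cycle_graph m) = {0..<m}"
  by (simp add: cycle_graph_def)

lemma cyc_pred_eq_iff: "i < m \<Longrightarrow> j < m \<Longrightarrow> cyc_pred m j = i \<longleftrightarrow> j = cyc_succ m i"
  using cyc_pred_cyc_succ[of i m] cyc_succ_cyc_pred[of j m] by auto

lemma adj_cycle_graph_iff_neighbour:
  "j < m \<Longrightarrow> adj (cycle_graph m) i j \<longleftrightarrow> i = cyc_pred m j \<or> i = cyc_succ m j"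
  using cyc_succ_eq_iff[of j m i] cyc_pred_eq_iff[of j m i] cyc_pred_less[of m j] cyc_succ_less[of m j]
  unfolding cycle_graph_def cyc_succ_def by auto

section \<open>Dominating sets of Sierpinski products of cycles\<close>

abbreviation cycle_sierpinski :: "nat \<Rightarrow> nat \<Rightarrow> (nat \<Rightarrow> nat) \<Rightarrow> (nat \<times> nat) graph" where
  "cycle_sierpinski n m f \<equiv> sierpinski_product (cycle_graph n) (cycle_graph m) f"

lemma verts_cycle_sierpinski: "verts (cycle_sierpinski n m f) = {0..<n} \<times> {0..<m}"
  by (simp add: sierpinski_product_def verts_cycle_graph)

lemma adj_cycle_sierpinski:
  "adj (cycle_sierpinski n m f) (g, h) (g', h') \<longleftrightarrow>
     g < n \<and> g' = g \<and> adj (cycle_graph m) h h' \<or> adj (cycle_graph n) g g' \<and> h = f g' \<and> h' = f g"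
  by (auto simp: sierpinski_product_def verts_cycle_graph)

lemma adj_cycle_sierpinski_into:
  "g < n \<Longrightarrow> adj (cycle_sierpinski n m f) u (g, h) \<longleftrightarrow>
    (\<exists>h'. u = (g, h') \<and> adj (cycle_graph m) h' h) \<or>
    (\<exists>g'. u = (g', f g) \<and> adj (cycle_graph n) g' g \<and> h = f g')"
  by (cases u) (auto simp: adj_cycle_sierpinski)

definition cycle_nbhd :: "nat \<Rightarrow> nat set \<Rightarrow> nat set" where
  "cycle_nbhd m A = A \<union> cyc_succ m ` A \<union> cyc_pred m ` A"

lemma subset_cycle_nbhd: "A \<subseteq> cycle_nbhd m A"
  unfolding cycle_nbhd_def by blast

lemma cycle_nbhd_mono: "A \<subseteq> B \<Longrightarrow> cycle_nbhd m A \<subseteq> cycle_nbhd m B"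
  unfolding cycle_nbhd_def by blast

lemma card_cycle_nbhd_le: "finite A \<Longrightarrow> card (cycle_nbhd m A) \<le> 3 * card A"
  unfolding cycle_nbhd_def
  using card_Un_le[of A "cyc_succ m ` A"] card_Un_le[of "A \<union> cyc_succ m ` A" "cyc_pred m ` A"]
    card_image_le[of A "cyc_succ m"] card_image_le[of A "cyc_pred m"]
  by linarith

lemma cyc_succ_image_iff:
  assumes "A \<subseteq> {0..<m}" "i < m"
  shows "i \<in> cyc_succ m ` A \<longleftrightarrow> cyc_pred m i \<in> A"
proof
  assume "i \<in> cyc_succ m ` A"
  then obtain j where "j \<in> A" "i = cyc_succ m j" by blast
  then show "cyc_pred m i \<in> A" using assms(1) cyc_pred_cyc_succ[of j m] by auto
next
  assume "cyc_pred m i \<in> A"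
  then show "i \<in> cyc_succ m ` A" using cyc_succ_cyc_pred[OF assms(2)] by (metis rev_image_eqI)
qed

lemma cyc_pred_image_iff:
  assumes "A \<subseteq> {0..<m}" "i < m"
  shows "i \<in> cyc_pred m ` A \<longleftrightarrow> cyc_succ m i \<in> A"
proof
  assume "i \<in> cyc_pred m ` A"
  then obtain j where "j \<in> A" "i = cyc_pred m j" by blast
  then show "cyc_succ m i \<in> A" using assms(1) cyc_succ_cyc_pred[of j m] by auto
next
  assume "cyc_succ m i \<in> A"
  then show "i \<in> cyc_pred m ` A" using cyc_pred_cyc_succ[OF assms(2)] by (metis rev_image_eqI)
qed

lemma mem_cycle_nbhd_iff:
  "A \<subseteq> {0..<m} \<Longrightarrow> i < m \<Longrightarrow>
    i \<in> cycle_nbhd m A \<longleftrightarrow> i \<in> A \<or> cyc_pred m i \<in> A \<or> cyc_succ m i \<in> A"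
  by (simp add: cycle_nbhd_def cyc_succ_image_iff cyc_pred_image_iff)

lemma dominated_in_cycle_sierpinski_iff:
  assumes "D \<subseteq> {0..<n} \<times> {0..<m}" "g < n" "h < m"
  shows "(g, h) \<in> D \<or> (\<exists>u\<in>D. adj (cycle_sierpinski n m f) u (g, h)) \<longleftrightarrow>
    h \<in> cycle_nbhd m (D `` {g}) \<union> {f g' |g'. g' \<in> {cyc_pred n g, cyc_succ n g} \<and> (g', f g) \<in> D}"
proof -
  have "D `` {g} \<subseteq> {0..<m}" using assms(1) by auto
  then have nbhd: "h \<in> cycle_nbhd m (D `` {g}) \<longleftrightarrow>
      (g, h) \<in> D \<or> (\<exists>h'. (g, h') \<in> D \<and> adj (cycle_graph m) h' h)"
    using assms(3) by (auto simp: mem_cycle_nbhd_iff adj_cycle_graph_iff_neighbour)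
  have across: "(\<exists>g'. (g', f g) \<in> D \<and> adj (cycle_graph n) g' g \<and> h = f g') \<longleftrightarrow>
      h \<in> {f g' |g'. g' \<in> {cyc_pred n g, cyc_succ n g} \<and> (g', f g) \<in> D}"
    using assms(2) by (auto simp: adj_cycle_graph_iff_neighbour)
  have "(\<exists>u\<in>D. adj (cycle_sierpinski n m f) u (g, h)) \<longleftrightarrow>
      (\<exists>h'. (g, h') \<in> D \<and> adj (cycle_graph m) h' h) \<or>
      (\<exists>g'. (g', f g) \<in> D \<and> adj (cycle_graph n) g' g \<and> h = f g')"
    unfolding Bex_def adj_cycle_sierpinski_into[OF assms(2)] by blast
  then show ?thesis
    unfolding nbhd across Un_iff by blast
qed

lemma dominating_set_cycle_sierpinski_iff:
  "dominating_set (cycle_sierpinski n m f) D \<longleftrightarrow> D \<subseteq> {0..<n} \<times> {0..<m} \<and>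
     (\<forall>g<n. {0..<m} \<subseteq> cycle_nbhd m (D `` {g}) \<union>
        {f g' |g'. g' \<in> {cyc_pred n g, cyc_succ n g} \<and> (g', f g) \<in> D})"
    (is "_ \<longleftrightarrow> _ \<and> (\<forall>g<n. {0..<m} \<subseteq> ?B g)")
proof -
  have "dominating_set (cycle_sierpinski n m f) D \<longleftrightarrow> D \<subseteq> {0..<n} \<times> {0..<m} \<and>
      (\<forall>g h. g < n \<and> h < m \<longrightarrow>
        (g, h) \<in> D \<or> (\<exists>u\<in>D. adj (cycle_sierpinski n m f) u (g, h)))"
    unfolding dominating_set_def verts_cycle_sierpinski by (simp add: Ball_def)
  also have "\<dots> \<longleftrightarrow> D \<subseteq> {0..<n} \<times> {0..<m} \<and> (\<forall>g h. g < n \<and> h < m \<longrightarrow> h \<in> ?B g)"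
    using dominated_in_cycle_sierpinski_iff[of D n m] by blast
  finally show ?thesis
    unfolding subset_iff[of "{0..<m}"] atLeastLessThan_iff by blast
qed

section \<open>Lower bounds\<close>

lemma uncovered_subset_neighbour_values:
  assumes "dominating_set (cycle_sierpinski n m f) D" "g < n"
  shows "{0..<m} - cycle_nbhd m (D `` {g}) \<subseteq>
    {f g' |g'. g' \<in> {cyc_pred n g, cyc_succ n g} \<and> (g', f g) \<in> D}"
  using assms unfolding dominating_set_cycle_sierpinski_iff by blast

lemma fiber_subset:
  "dominating_set (cycle_sierpinski n m f) D \<Longrightarrow> D `` {g} \<subseteq> {0..<m}"
  unfolding dominating_set_cycle_sierpinski_iff by blast

lemma card_uncovered_ge:
  assumes "dominating_set (cycle_sierpinski n m f) D"
  shows "m - 3 * card (D `` {g}) \<le> card ({0..<m} - cycle_nbhd m (D `` {g}))"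
proof -
  have fin: "finite (D `` {g})"
    using fiber_subset[OF assms] finite_subset by blast
  have "m - 3 * card (D `` {g}) \<le> card {0..<m} - card (cycle_nbhd m (D `` {g}))"
    using card_cycle_nbhd_le[OF fin, of m] by simp
  also have "\<dots> \<le> card ({0..<m} - cycle_nbhd m (D `` {g}))"
    by (rule diff_card_le_card_Diff) (simp add: fin cycle_nbhd_def)
  finally show ?thesis .
qed

lemma card_fiber_ge:
  assumes "dominating_set (cycle_sierpinski n m f) D" "g < n"
  shows "m \<le> 3 * card (D `` {g}) + 2"
proof -
  have "m - 3 * card (D `` {g}) \<le> card ({0..<m} - cycle_nbhd m (D `` {g}))"
    by (rule card_uncovered_ge[OF assms(1)])
  also have "\<dots> \<le> card {f (cyc_pred n g), f (cyc_succ n g)}"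
    by (rule card_mono) (use uncovered_subset_neighbour_values[OF assms] in auto)
  also have "\<dots> \<le> 2"
    by (simp add: card_insert_if)
  finally show ?thesis by linarith
qed

lemma tight_fiber_neighbours:
  assumes dom: "dominating_set (cycle_sierpinski n m f) D" and "g < n"
    and "m = 3 * k + 2" and "card (D `` {g}) \<le> k"
  shows "f (cyc_pred n g) \<notin> D `` {g}" and "(cyc_succ n g, f g) \<in> D"
proof -
  let ?X = "{0..<m} - cycle_nbhd m (D `` {g})"
  let ?a = "f (cyc_pred n g)" and ?b = "f (cyc_succ n g)"
  have X_sub: "?X \<subseteq> {f g' |g'. g' \<in> {cyc_pred n g, cyc_succ n g} \<and> (g', f g) \<in> D}"
    by (rule uncovered_subset_neighbour_values[OF dom \<open>g < n\<close>])
  have "2 \<le> card ?X"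
    using card_uncovered_ge[OF dom, of g] assms(3,4) by linarith
  have sub: "?X \<subseteq> {?a, ?b}" using X_sub by blast
  moreover have "card {?a, ?b} \<le> 2" by (simp add: card_insert_if)
  ultimately have card_eq: "card ?X = card {?a, ?b}"
    using card_mono[of "{?a, ?b}" ?X] \<open>2 \<le> card ?X\<close> by simp
  then have "?X = {?a, ?b}" using card_subset_eq[OF _ sub] by simp
  have "?a \<noteq> ?b" using card_eq \<open>2 \<le> card ?X\<close> by auto
  have "?a \<notin> cycle_nbhd m (D `` {g})" using \<open>?X = {?a, ?b}\<close> by blast
  then show "?a \<notin> D `` {g}" by (simp add: cycle_nbhd_def)
  have "?b \<in> ?X" using \<open>?X = {?a, ?b}\<close> by blast
  then obtain g' where "?b = f g'" "g' \<in> {cyc_pred n g, cyc_succ n g}" "(g', f g) \<in> D"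
    using X_sub by blast
  with \<open>?a \<noteq> ?b\<close> show "(cyc_succ n g, f g) \<in> D" by auto
qed

lemma tight_fiber_succ_not_tight:
  assumes dom: "dominating_set (cycle_sierpinski n m f) D" and "g < n"
    and "m = 3 * k + 2" and "card (D `` {g}) \<le> k"
  shows "k < card (D `` {cyc_succ n g})"
proof (rule ccontr)
  assume "\<not> k < card (D `` {cyc_succ n g})"
  then have "f (cyc_pred n (cyc_succ n g)) \<notin> D `` {cyc_succ n g}"
    using tight_fiber_neighbours(1)[OF dom cyc_succ_less] assms(2,3) by simp
  moreover have "(cyc_succ n g, f g) \<in> D"
    using tight_fiber_neighbours(2)[OF assms] .
  ultimately show False
    using cyc_pred_cyc_succ[OF \<open>g < n\<close>] by simp
qed

lemma card_eq_sum_card_fibers: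
  fixes D :: "(nat \<times> 'a) set"
  assumes "D \<subseteq> {0..<n} \<times> B" "finite B"
  shows "card D = (\<Sum>g\<in>{0..<n}. card (D `` {g}))"
proof -
  have fin: "finite (D `` {g})" for g
    by (rule finite_subset[OF _ assms(2)]) (use assms(1) in auto)
  have "D = Sigma {0..<n} (\<lambda>g. D `` {g})" using assms(1) by blast
  also have "card \<dots> = (\<Sum>g\<in>{0..<n}. card (D `` {g}))"
    by (rule card_SigmaI) (simp_all add: fin)
  finally show ?thesis .
qed

lemma sum_if_mem_Suc:
  "(\<Sum>g\<in>{0..<n}. if g \<in> T then k else Suc k) = k * n + card ({0..<n} - T)"
proof -
  have "(\<Sum>g\<in>{0..<n}. if g \<in> T then k else Suc k) = (\<Sum>g\<in>{0..<n}. k + (if g \<in> T then 0 else 1))"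
    by (rule sum.cong) auto
  also have "\<dots> = k * n + card ({0..<n} - T)"
    by (simp add: sum.distrib sum.If_cases Diff_eq)
  finally show ?thesis .
qed

lemma succ_free_card_compl_ge:
  assumes "T \<subseteq> {0..<n}" and "\<And>g. g \<in> T \<Longrightarrow> cyc_succ n g \<notin> T"
  shows "n - n div 2 \<le> card ({0..<n} - T)"
proof (cases "n = 0")
  case False
  have "inj_on (cyc_succ n) T"
    using assms(1) cyc_pred_cyc_succ by (metis atLeastLessThan_iff inj_on_inverseI subsetD)
  moreover have "cyc_succ n ` T \<subseteq> {0..<n} - T"
    using assms cyc_succ_less[of n] False by auto
  ultimately have "card T \<le> card ({0..<n} - T)"
    by (intro card_inj_on_le) auto
  moreover have "card T + card ({0..<n} - T) = n"
    using assms(1) card_Diff_subset[of T "{0..<n}"] card_mono[OF _ assms(1)] finite_subset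
    by fastforce
  ultimately show ?thesis by linarith
qed simp

lemma card_dominating_set_ge:
  assumes dom: "dominating_set (cycle_sierpinski n m f) D" and "m = 3 * k + p" "p \<le> 2"
  shows "k * n + card ({0..<n} - {g. card (D `` {g}) \<le> k}) \<le> card D"
proof -
  let ?T = "{g. card (D `` {g}) \<le> k}"
  have "k * n + card ({0..<n} - ?T) = (\<Sum>g\<in>{0..<n}. if g \<in> ?T then k else Suc k)"
    by (rule sum_if_mem_Suc[symmetric])
  also have "\<dots> \<le> (\<Sum>g\<in>{0..<n}. card (D `` {g}))"
    using card_fiber_ge[OF dom] assms(2,3) by (intro sum_mono) fastforce
  also have "\<dots> = card D"
    using dom unfolding dominating_set_cycle_sierpinski_iff
    by (intro card_eq_sum_card_fibers[symmetric, of _ _ "{0..<m}"]) simp_all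
  finally show ?thesis .
qed

lemma domination_number_cycle_sierpinski_ge:
  assumes "m = 3 * k + p" "p \<le> 2"
  shows "k * n \<le> domination_number (cycle_sierpinski n m f)"
proof (rule domination_number_geI)
  show "finite (verts (cycle_sierpinski n m f))" by (simp add: verts_cycle_sierpinski)
  show "k * n \<le> card D" if "dominating_set (cycle_sierpinski n m f) D" for D
    using card_dominating_set_ge[OF that assms] by linarith
qed

lemma domination_number_cycle_sierpinski_3k2_ge:
  "k * n + (n - n div 2) \<le> domination_number (cycle_sierpinski n (3 * k + 2) f)"
proof (rule domination_number_geI)
  show "finite (verts (cycle_sierpinski n (3 * k + 2) f))" by (simp add: verts_cycle_sierpinski)
  fix D assume dom: "dominating_set (cycle_sierpinski n (3 * k + 2) f) D"
  let ?T = "{g \<in> {0..<n}. card (D `` {g}) \<le> k}"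
  have "n - n div 2 \<le> card ({0..<n} - ?T)"
  proof (rule succ_free_card_compl_ge)
    show "cyc_succ n g \<notin> ?T" if "g \<in> ?T" for g
      using tight_fiber_succ_not_tight[OF dom _ refl, of g] that by auto
  qed auto
  also have "{0..<n} - ?T = {0..<n} - {g. card (D `` {g}) \<le> k}" by blast
  finally show "k * n + (n - n div 2) \<le> card D"
    using card_dominating_set_ge[OF dom, of k 2] by linarith
qed

lemma sierpinski_domination_number_cycles_geI:
  assumes "0 < m" "\<And>f. L \<le> domination_number (cycle_sierpinski n m f)"
  shows "L \<le> sierpinski_domination_number (cycle_graph n) (cycle_graph m)"
  by (rule sierpinski_domination_number_geI[of "restrict (\<lambda>_. 0) {0..<n}"])
    (use assms in \<open>auto simp: verts_cycle_graph restrict_PiE_iff\<close>)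

section \<open>Constructions\<close>

lemma sierpinski_domination_number_cycles_le:
  assumes "\<And>g. g < n \<Longrightarrow> f g < m"
  shows "sierpinski_domination_number (cycle_graph n) (cycle_graph m)
    \<le> domination_number (cycle_sierpinski n m f)"
proof -
  have "restrict f {0..<n} \<in> verts (cycle_graph n) \<rightarrow>\<^sub>E verts (cycle_graph m)"
    using assms by (simp add: verts_cycle_graph restrict_PiE_iff)
  moreover have "cycle_sierpinski n m (restrict f {0..<n}) = cycle_sierpinski n m f"
    by (auto simp: sierpinski_product_def cycle_graph_def fun_eq_iff)
  ultimately show ?thesis
    by (metis sierpinski_domination_number_le)
qed

lemma domination_number_cycle_sierpinski_le:
  assumes sub: "\<And>g. g < n \<Longrightarrow> S g \<subseteq> {0..<m}"
    and cover: "\<And>g. g < n \<Longrightarrow> {0..<m} \<subseteq> cycle_nbhd m (S g) \<union>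
      {f g' |g'. g' \<in> {cyc_pred n g, cyc_succ n g} \<and> f g \<in> S g'}"
  shows "domination_number (cycle_sierpinski n m f) \<le> (\<Sum>g\<in>{0..<n}. card (S g))"
proof -
  let ?D = "Sigma {0..<n} S"
  have fin: "finite (S g)" if "g < n" for g
    using sub[OF that] finite_subset by blast
  have "?D \<subseteq> {0..<n} \<times> {0..<m}" using sub by fastforce
  moreover have "{0..<m} \<subseteq> cycle_nbhd m (?D `` {g}) \<union>
      {f g' |g'. g' \<in> {cyc_pred n g, cyc_succ n g} \<and> (g', f g) \<in> ?D}" if "g < n" for g
  proof -
    have "?D `` {g} = S g" using that by auto
    moreover have "{f g' |g'. g' \<in> {cyc_pred n g, cyc_succ n g} \<and> (g', f g) \<in> ?D} =
        {f g' |g'. g' \<in> {cyc_pred n g, cyc_succ n g} \<and> f g \<in> S g'}"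
      using that cyc_pred_less[of n g] cyc_succ_less[of n g] by auto
    ultimately show ?thesis using cover[OF that] by simp
  qed
  ultimately have "dominating_set (cycle_sierpinski n m f) ?D"
    unfolding dominating_set_cycle_sierpinski_iff by blast
  then have "domination_number (cycle_sierpinski n m f) \<le> card ?D"
    by (rule domination_number_le) (use fin in auto)
  also have "\<dots> = (\<Sum>g\<in>{0..<n}. card (S g))"
    by (rule card_SigmaI) (simp_all add: fin)
  finally show ?thesis .
qed

definition progression :: "nat \<Rightarrow> nat \<Rightarrow> nat set" where
  "progression c r = (\<lambda>i. c + 3 * i) ` {..<r}"

lemma finite_progression: "finite (progression c r)"
  by (simp add: progression_def)

lemma card_progression: "card (progression c r) = r"
  unfolding progression_def by (subst card_image) (auto simp: inj_on_def)

lemma progression_subset: "c + 3 * r \<le> m + 2 \<Longrightarrow> progression c r \<subseteq> {0..<m}"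
  unfolding progression_def by auto

lemma mem_progression_iff: "h \<in> progression c r \<longleftrightarrow> c \<le> h \<and> h < c + 3 * r \<and> (h - c) mod 3 = 0"
proof
  assume "h \<in> progression c r"
  then show "c \<le> h \<and> h < c + 3 * r \<and> (h - c) mod 3 = 0" by (auto simp: progression_def)
next
  assume "c \<le> h \<and> h < c + 3 * r \<and> (h - c) mod 3 = 0"
  then have "h = c + 3 * ((h - c) div 3)" "(h - c) div 3 < r" by auto
  then show "h \<in> progression c r" unfolding progression_def by (metis image_eqI lessThan_iff)
qed

lemma mem_cycle_nbhd_progression:
  assumes "c \<le> Suc h" "h + 2 \<le> c + 3 * r" "c + 3 * r \<le> m + 2" "h < m"
  shows "h \<in> cycle_nbhd m (progression c r)"
proof -
  have "h \<in> progression c r \<or> h - 1 \<in> progression c r \<and> 0 < h \<or> Suc h \<in> progression c r \<and> Suc h < m"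
    using assms unfolding mem_progression_iff by presburger
  then show ?thesis
    using assms(4) progression_subset[OF assms(3)]
    by (auto simp: mem_cycle_nbhd_iff cyc_pred_eq_minus cyc_succ_eq_Suc)
qed

lemma sierpinski_domination_number_cycles_3k_le:
  assumes "1 \<le> k"
  shows "sierpinski_domination_number (cycle_graph n) (cycle_graph (3 * k)) \<le> k * n"
proof -
  have "sierpinski_domination_number (cycle_graph n) (cycle_graph (3 * k))
      \<le> domination_number (cycle_sierpinski n (3 * k) (\<lambda>_. 0))"
    by (rule sierpinski_domination_number_cycles_le) (use assms in simp)
  also have "\<dots> \<le> (\<Sum>g\<in>{0..<n}. card (progression 1 k))"
    by (rule domination_number_cycle_sierpinski_le)
      (use progression_subset[of 1 k "3 * k"] mem_cycle_nbhd_progression[of 1 _ k "3 * k"] in auto)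
  also have "\<dots> = k * n"
    by (simp add: card_progression)
  finally show ?thesis .
qed

text \<open>For \<open>v \<in> {0, 2}\<close>: a \<open>k\<close>-subset of \<open>C\<^bsub>3k+1\<^esub>\<close> dominating every vertex except \<open>v\<close>,
  and containing \<open>2 - v\<close>.\<close>

definition punctured_cover :: "nat \<Rightarrow> nat \<Rightarrow> nat set" where
  "punctured_cover k v = (if v = 0 then progression 2 k else insert 0 (progression 4 (k - 1)))"

lemma punctured_cover_subset: "1 \<le> k \<Longrightarrow> punctured_cover k v \<subseteq> {0..<3 * k + 1}"
  unfolding punctured_cover_def using progression_subset[of 2 k] progression_subset[of 4 "k - 1"]
  by auto

lemma card_punctured_cover: "1 \<le> k \<Longrightarrow> card (punctured_cover k v) = k"
proof -
  assume "1 \<le> k"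
  have "0 \<notin> progression 4 (k - 1)" by (simp add: mem_progression_iff)
  then show ?thesis using \<open>1 \<le> k\<close>
    by (simp add: punctured_cover_def card_progression finite_progression)
qed

lemma mem_punctured_cover: "1 \<le> k \<Longrightarrow> v \<in> {0, 2} \<Longrightarrow> 2 - v \<in> punctured_cover k v"
  by (auto simp: punctured_cover_def mem_progression_iff)

lemma punctured_cover_dominates:
  assumes "1 \<le> k" "v \<in> {0, 2}"
  shows "{0..<3 * k + 1} - {v} \<subseteq> cycle_nbhd (3 * k + 1) (punctured_cover k v)"
proof
  fix h assume h: "h \<in> {0..<3 * k + 1} - {v}"
  show "h \<in> cycle_nbhd (3 * k + 1) (punctured_cover k v)"
  proof (cases "v = 0")
    case True
    then show ?thesis using h by (auto simp: punctured_cover_def intro!: mem_cycle_nbhd_progression)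
  next
    case False
    let ?A = "insert 0 (progression 4 (k - 1))"
    have A: "punctured_cover k v = ?A" "?A \<subseteq> {0..<3 * k + 1}"
      using False punctured_cover_subset[OF assms(1), of v] by (simp_all add: punctured_cover_def)
    consider "h = 0" | "h = 1" | "h = 3 * k" | "3 \<le> h" "h < 3 * k"
      using h False assms(2) by fastforce
    then show ?thesis
    proof cases
      case 1
      then show ?thesis using A(1) subset_cycle_nbhd by blast
    next
      case 2
      have "cyc_pred (3 * k + 1) h = 0" using 2 assms(1) by (simp add: cyc_pred_eq_minus)
      then show ?thesis using mem_cycle_nbhd_iff[OF A(2), of h] A(1) h by simp
    next
      case 3
      then show ?thesis using mem_cycle_nbhd_iff[OF A(2)] A(1) by (simp add: cyc_succ_def)
    next
      case 4
      then have "h \<in> cycle_nbhd (3 * k + 1) (progression 4 (k - 1))"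
        by (intro mem_cycle_nbhd_progression) auto
      then have "h \<in> cycle_nbhd (3 * k + 1) ?A"
        using cycle_nbhd_mono[of "progression 4 (k - 1)" ?A] by blast
      then show ?thesis unfolding A(1) .
    qed
  qed
qed

lemma sum_card_fibers_eq:
  assumes "\<And>g. g < n \<Longrightarrow> card (S g) = (if g \<in> T then k else Suc k)"
  shows "(\<Sum>g\<in>{0..<n}. card (S g)) = k * n + card ({0..<n} - T)"
  using assms by (simp add: sum_if_mem_Suc[symmetric])

text \<open>Fibers outside \<open>T\<close> have \<open>k + 1\<close> vertices and dominate themselves. A fiber \<open>g \<in> T\<close>
  misses only \<open>(g, F (g-1))\<close>, which is dominated from \<open>(g-1, F g)\<close>: the hypothesis on \<open>F\<close>
  puts \<open>F g\<close> into the fiber of \<open>g - 1\<close>.\<close>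

lemma sierpinski_domination_number_cycles_3k1_le:
  fixes F :: "nat \<Rightarrow> nat"
  assumes "1 \<le> k" "T \<subseteq> {0..<n}"
    and F_vals: "\<And>g. g < n \<Longrightarrow> F g \<in> {0, 2}"
    and F_T: "\<And>g. g \<in> T \<Longrightarrow>
      if cyc_pred n g \<in> T then F g \<noteq> F (cyc_pred n (cyc_pred n g)) else F g = 0"
  shows "sierpinski_domination_number (cycle_graph n) (cycle_graph (3 * k + 1))
    \<le> k * n + card ({0..<n} - T)"
proof -
  let ?m = "3 * k + 1"
  define S where "S g = (if g \<in> T then punctured_cover k (F (cyc_pred n g)) else progression 0 (Suc k))"
    for g
  have full: "{0..<?m} \<subseteq> cycle_nbhd ?m (progression 0 (Suc k))"
    by (auto intro: mem_cycle_nbhd_progression)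
  have F_in_pred_fiber: "F g \<in> S (cyc_pred n g)" if "g \<in> T" for g
  proof (cases "cyc_pred n g \<in> T")
    case True
    then have "0 < n" using assms(2) by (auto simp: subset_iff)
    then have pp: "cyc_pred n (cyc_pred n g) < n" by (rule cyc_pred_less)
    moreover have "F g \<in> {0, 2}" using that assms(2) by (intro F_vals) auto
    moreover have "F g \<noteq> F (cyc_pred n (cyc_pred n g))" using F_T[OF that] True by simp
    ultimately have "F g = 2 - F (cyc_pred n (cyc_pred n g))"
      using F_vals by fastforce
    then show ?thesis using True mem_punctured_cover[OF assms(1) F_vals[OF pp]]
      by (simp add: S_def)
  next
    case False
    then show ?thesis using F_T[OF that] by (simp add: S_def mem_progression_iff)
  qed
  have "sierpinski_domination_number (cycle_graph n) (cycle_graph ?m)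
      \<le> domination_number (cycle_sierpinski n ?m F)"
    using F_vals assms(1) by (intro sierpinski_domination_number_cycles_le) fastforce
  also have "\<dots> \<le> (\<Sum>g\<in>{0..<n}. card (S g))"
  proof (rule domination_number_cycle_sierpinski_le)
    show "S g \<subseteq> {0..<?m}" for g
      using punctured_cover_subset[OF assms(1)] progression_subset[of 0 "Suc k" ?m] by (simp add: S_def)
    fix g assume "g < n"
    show "{0..<?m} \<subseteq> cycle_nbhd ?m (S g) \<union>
        {F g' |g'. g' \<in> {cyc_pred n g, cyc_succ n g} \<and> F g \<in> S g'}"
    proof (cases "g \<in> T")
      case True
      have "cyc_pred n g < n" using \<open>g < n\<close> by (simp add: cyc_pred_less)
      then have "{0..<?m} - {F (cyc_pred n g)} \<subseteq> cycle_nbhd ?m (S g)"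
        using True punctured_cover_dominates[OF assms(1) F_vals] by (simp add: S_def)
      then show ?thesis using F_in_pred_fiber[OF True] by blast
    qed (rule le_supI1, use full in \<open>simp add: S_def\<close>)
  qed
  also have "\<dots> = k * n + card ({0..<n} - T)"
    by (rule sum_card_fibers_eq) (simp add: S_def card_punctured_cover[OF assms(1)] card_progression)
  finally show ?thesis .
qed

text \<open>A fiber \<open>g \<in> T\<close> misses \<open>0\<close> and \<open>1\<close>, which are \<open>F (g-1)\<close> and \<open>F (g+1)\<close> in some
  order; both are dominated across, since the neighbouring fibers lie outside \<open>T\<close> and contain
  \<open>F g = 0\<close>.\<close>

lemma sierpinski_domination_number_cycles_3k2_le:
  fixes F :: "nat \<Rightarrow> nat"
  assumes "T \<subseteq> {0..<n}" and F_vals: "\<And>g. g < n \<Longrightarrow> F g \<le> 1"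
    and F_T: "\<And>g. g \<in> T \<Longrightarrow> F g = 0 \<and> cyc_pred n g \<notin> T \<and> cyc_succ n g \<notin> T \<and>
      F (cyc_pred n g) \<noteq> F (cyc_succ n g)"
  shows "sierpinski_domination_number (cycle_graph n) (cycle_graph (3 * k + 2))
    \<le> k * n + card ({0..<n} - T)"
proof -
  let ?m = "3 * k + 2"
  define S where "S g = (if g \<in> T then progression 3 k else progression 0 (Suc k))" for g
  have full: "{0..<?m} \<subseteq> cycle_nbhd ?m (progression 0 (Suc k))"
    by (auto intro: mem_cycle_nbhd_progression)
  have "sierpinski_domination_number (cycle_graph n) (cycle_graph ?m)
      \<le> domination_number (cycle_sierpinski n ?m F)"
    using F_vals by (intro sierpinski_domination_number_cycles_le) fastforce
  also have "\<dots> \<le> (\<Sum>g\<in>{0..<n}. card (S g))"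
  proof (rule domination_number_cycle_sierpinski_le)
    show "S g \<subseteq> {0..<?m}" for g
      using progression_subset[of 3 k ?m] progression_subset[of 0 "Suc k" ?m] by (simp add: S_def)
    fix g assume "g < n"
    show "{0..<?m} \<subseteq> cycle_nbhd ?m (S g) \<union>
        {F g' |g'. g' \<in> {cyc_pred n g, cyc_succ n g} \<and> F g \<in> S g'}"
    proof (cases "g \<in> T")
      case True
      have "{0..<?m} - {0, 1} \<subseteq> cycle_nbhd ?m (S g)"
        using True by (auto simp: S_def intro: mem_cycle_nbhd_progression)
      moreover have "F (cyc_pred n g) \<le> 1" "F (cyc_succ n g) \<le> 1"
        using F_vals cyc_pred_less cyc_succ_less \<open>g < n\<close> by simp_all
      then have "{0, 1} = {F (cyc_pred n g), F (cyc_succ n g)}"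
        using F_T[OF True] by (cases "F (cyc_pred n g)") auto
      moreover have "F g \<in> S (cyc_pred n g)" "F g \<in> S (cyc_succ n g)"
        using F_T[OF True] by (simp_all add: S_def mem_progression_iff)
      ultimately show ?thesis by blast
    qed (rule le_supI1, use full in \<open>simp add: S_def\<close>)
  qed
  also have "\<dots> = k * n + card ({0..<n} - T)"
    by (rule sum_card_fibers_eq) (simp add: S_def card_progression)
  finally show ?thesis .
qed

definition pair_pattern :: "nat \<Rightarrow> nat" where
  "pair_pattern g = g div 2 mod 2"

lemma pair_pattern_le: "pair_pattern g \<le> 1"
  by (simp add: pair_pattern_def)

lemma pair_pattern_alternates: "2 \<le> g \<Longrightarrow> pair_pattern g \<noteq> pair_pattern (g - 2)"
  unfolding pair_pattern_def by presburger

lemma pair_pattern_wrap: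
  "n mod 4 = 0 \<Longrightarrow> 0 < n \<Longrightarrow> pair_pattern (n - 1) = 1 \<and> pair_pattern (n - 2) = 1"
  unfolding pair_pattern_def by presburger

lemma sierpinski_domination_number_cycles_3k1_le_plus_1:
  assumes "0 < n" "1 \<le> k"
  shows "sierpinski_domination_number (cycle_graph n) (cycle_graph (3 * k + 1)) \<le> k * n + 1"
proof -
  have "sierpinski_domination_number (cycle_graph n) (cycle_graph (3 * k + 1))
      \<le> k * n + card ({0..<n} - {1..<n})"
  proof (rule sierpinski_domination_number_cycles_3k1_le[OF assms(2)])
    show "2 * pair_pattern g \<in> {0, 2}" for g
      using pair_pattern_le[of g] by auto
    fix g assume g: "g \<in> {1..<n}"
    show "if cyc_pred n g \<in> {1..<n} then 2 * pair_pattern g \<noteq> 2 * pair_pattern (cyc_pred n (cyc_pred n g))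
      else 2 * pair_pattern g = 0"
    proof (cases "g = 1")
      case True
      then show ?thesis using g by (simp add: cyc_pred_eq_minus pair_pattern_def)
    next
      case False
      then have "cyc_pred n g = g - 1" "cyc_pred n (g - 1) = g - 2"
        using g cyc_pred_eq_minus[of g n] cyc_pred_eq_minus[of "g - 1" n] by auto
      moreover have "2 \<le> g" using g False by auto
      ultimately show ?thesis using g pair_pattern_alternates[of g] by auto
    qed
  qed auto
  moreover have "{0..<n} - {1..<n} = {0}" using assms(1) by auto
  ultimately show ?thesis by simp
qed

lemma sierpinski_domination_number_cycles_3k1_le_mod4:
  assumes "n mod 4 = 0" "0 < n" "1 \<le> k"
  shows "sierpinski_domination_number (cycle_graph n) (cycle_graph (3 * k + 1)) \<le> k * n"
proof -
  have "sierpinski_domination_number (cycle_graph n) (cycle_graph (3 * k + 1))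
      \<le> k * n + card ({0..<n} - {0..<n})"
  proof (rule sierpinski_domination_number_cycles_3k1_le[OF assms(3)])
    show "2 * pair_pattern g \<in> {0, 2}" for g
      using pair_pattern_le[of g] by auto
    have n4: "4 \<le> n" using assms(1,2) by presburger
    fix g assume g: "g \<in> {0..<n}"
    have "pair_pattern g \<noteq> pair_pattern (cyc_pred n (cyc_pred n g))"
    proof -
      consider "g = 0" | "g = 1" | "2 \<le> g" by linarith
      then show ?thesis
      proof cases
        case 1
        then have "cyc_pred n (cyc_pred n g) = n - 2"
          using n4 cyc_pred_eq_minus[of "n - 1" n] by (simp add: cyc_pred_0)
        then show ?thesis using 1 pair_pattern_wrap[OF assms(1,2)] by (simp add: pair_pattern_def)
      next
        case 2
        then have "cyc_pred n (cyc_pred n g) = n - 1"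
          using n4 cyc_pred_eq_minus[of 1 n] by (simp add: cyc_pred_0)
        then show ?thesis using 2 pair_pattern_wrap[OF assms(1,2)] by (simp add: pair_pattern_def)
      next
        case 3
        then have "cyc_pred n (cyc_pred n g) = g - 2"
          using g cyc_pred_eq_minus[of g n] cyc_pred_eq_minus[of "g - 1" n] by simp
        then show ?thesis using 3 pair_pattern_alternates by simp
      qed
    qed
    then show "if cyc_pred n g \<in> {0..<n} then 2 * pair_pattern g \<noteq> 2 * pair_pattern (cyc_pred n (cyc_pred n g))
      else 2 * pair_pattern g = 0"
      using cyc_pred_less[OF assms(2)] by simp
  qed simp
  then show ?thesis by simp
qed

lemma pair_pattern_odd_neighbours: "odd g \<Longrightarrow> pair_pattern (g - 1) \<noteq> pair_pattern (Suc g)"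
  unfolding pair_pattern_def by presburger

lemma sierpinski_domination_number_cycles_3k2_le_half_plus_1:
  assumes "0 < n"
  shows "sierpinski_domination_number (cycle_graph n) (cycle_graph (3 * k + 2)) \<le> k * n + n div 2 + 1"
proof -
  let ?F = "\<lambda>g. if odd g then 0 else pair_pattern g"
  let ?T = "{g. odd g \<and> Suc g < n}"
  have "sierpinski_domination_number (cycle_graph n) (cycle_graph (3 * k + 2))
      \<le> k * n + card ({0..<n} - ?T)"
  proof (rule sierpinski_domination_number_cycles_3k2_le)
    show "?F g \<le> 1" for g
      using pair_pattern_le[of g] by simp
    fix g assume "g \<in> ?T"
    then have "odd g" "Suc g < n" by auto
    moreover from this have "cyc_pred n g = g - 1" "cyc_succ n g = Suc g"
      using cyc_pred_eq_minus[of g n] cyc_succ_eq_Suc[of g n] by (auto simp: odd_pos)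
    ultimately show "?F g = 0 \<and> cyc_pred n g \<notin> ?T \<and> cyc_succ n g \<notin> ?T \<and>
        ?F (cyc_pred n g) \<noteq> ?F (cyc_succ n g)"
      using pair_pattern_odd_neighbours[of g] by auto
  qed auto
  moreover have "card ({0..<n} - ?T) \<le> n div 2 + 1"
  proof -
    have "{0..<n} - ?T \<subseteq> insert (n - 1) ((*) 2 ` {..<n div 2})"
    proof
      fix x assume "x \<in> {0..<n} - ?T"
      then have "x = n - 1 \<or> x = 2 * (x div 2) \<and> x div 2 < n div 2" by auto
      then show "x \<in> insert (n - 1) ((*) 2 ` {..<n div 2})" by auto
    qed
    then have "card ({0..<n} - ?T) \<le> card (insert (n - 1) ((*) 2 ` {..<n div 2}))"
      by (rule card_mono[rotated]) simp
    also have "\<dots> \<le> n div 2 + 1"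
      using card_image_le[of "{..<n div 2}" "(*) 2"] by (simp add: card_insert_if)
    finally show ?thesis .
  qed
  ultimately show ?thesis by linarith
qed

lemma sierpinski_domination_number_cycles_3k2_le_mod4:
  assumes "n mod 4 = 0" "0 < n"
  shows "sierpinski_domination_number (cycle_graph n) (cycle_graph (3 * k + 2)) \<le> k * n + n div 2"
proof -
  let ?F = "\<lambda>g. if odd g then 0 else pair_pattern g"
  let ?T = "{g \<in> {0..<n}. odd g}"
  have "sierpinski_domination_number (cycle_graph n) (cycle_graph (3 * k + 2))
      \<le> k * n + card ({0..<n} - ?T)"
  proof (rule sierpinski_domination_number_cycles_3k2_le)
    show "?F g \<le> 1" for g
      using pair_pattern_le[of g] by simp
    fix g assume "g \<in> ?T"
    then have "odd g" "g < n" by auto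
    consider "Suc g < n" | "g = n - 1" using \<open>g < n\<close> by linarith
    then show "?F g = 0 \<and> cyc_pred n g \<notin> ?T \<and> cyc_succ n g \<notin> ?T \<and>
        ?F (cyc_pred n g) \<noteq> ?F (cyc_succ n g)"
    proof cases
      case 1
      then have "cyc_pred n g = g - 1" "cyc_succ n g = Suc g"
        using \<open>odd g\<close> cyc_pred_eq_minus[of g n] cyc_succ_eq_Suc[of g n] by (auto simp: odd_pos)
      then show ?thesis using \<open>odd g\<close> pair_pattern_odd_neighbours[of g] by auto
    next
      case 2
      have "even n" using assms(1) by presburger
      moreover have "cyc_pred n g = n - 2" "cyc_succ n g = 0"
        using 2 \<open>odd g\<close> assms(2) cyc_pred_eq_minus[of g n] by (auto simp: cyc_succ_def odd_pos)
      ultimately show ?thesis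
        using \<open>odd g\<close> pair_pattern_wrap[OF assms] assms(2) by (auto simp: pair_pattern_def)
    qed
  qed auto
  moreover have "card ({0..<n} - ?T) \<le> n div 2"
  proof -
    have "{0..<n} - ?T \<subseteq> (*) 2 ` {..<n div 2}"
    proof
      fix x assume "x \<in> {0..<n} - ?T"
      then have "x = 2 * (x div 2) \<and> x div 2 < n div 2" using assms(1) by auto
      then show "x \<in> (*) 2 ` {..<n div 2}" by blast
    qed
    then have "card ({0..<n} - ?T) \<le> card ((*) 2 ` {..<n div 2})"
      by (rule card_mono[rotated]) simp
    also have "\<dots> \<le> n div 2"
      using card_image_le[of "{..<n div 2}" "(*) 2"] by simp
    finally show ?thesis .
  qed
  ultimately show ?thesis by linarith
qed

theorem theorem3p1:
  fixes n k p :: nat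
  assumes "n \<ge> 3" and "k \<ge> 1" and "p \<in> {0, 1, 2}"
  shows "sierpinski_domination_number (cycle_graph n) (cycle_graph (3 * k + p)) \<in>
           (if p = 0 then {k * n}
            else if p = 1 then {k * n, k * n + 1}
            else {k * n + n div 2, k * n + n div 2 + 1}) \<and>
         (n mod 4 = 0 \<longrightarrow>
           sierpinski_domination_number (cycle_graph n) (cycle_graph (3 * k + 1)) = k * n \<and>
           sierpinski_domination_number (cycle_graph n) (cycle_graph (3 * k + 2)) = k * n + n div 2)"
proof -
  have n: "0 < n" using assms(1) by simp
  have lower: "k * n \<le> sierpinski_domination_number (cycle_graph n) (cycle_graph (3 * k + q))"
    if "q \<le> 2" for q
    using that assms(2) domination_number_cycle_sierpinski_ge
    by (intro sierpinski_domination_number_cycles_geI) auto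
  have lower_3k2: "k * n + (n - n div 2)
      \<le> sierpinski_domination_number (cycle_graph n) (cycle_graph (3 * k + 2))"
    by (rule sierpinski_domination_number_cycles_geI) (simp, rule domination_number_cycle_sierpinski_3k2_ge)
  have "n div 2 \<le> n - n div 2" by simp
  then have "sierpinski_domination_number (cycle_graph n) (cycle_graph (3 * k + p)) \<in>
           (if p = 0 then {k * n}
            else if p = 1 then {k * n, k * n + 1}
            else {k * n + n div 2, k * n + n div 2 + 1})"
    using assms(3) lower[of 0] lower[of 1] lower_3k2
      sierpinski_domination_number_cycles_3k_le[OF assms(2), of n]
      sierpinski_domination_number_cycles_3k1_le_plus_1[OF n assms(2)]
      sierpinski_domination_number_cycles_3k2_le_half_plus_1[OF n, of k]
    by auto
  moreover have "n - n div 2 = n div 2" if "n mod 4 = 0" using that by presburger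
  ultimately show ?thesis
    using lower[of 1] lower_3k2
      sierpinski_domination_number_cycles_3k1_le_mod4[OF _ n assms(2)]
      sierpinski_domination_number_cycles_3k2_le_mod4[OF _ n, of k]
    by fastforce
qed

end
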